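(* Let $T$ be a tree with positive edge-lengths, let $\Sigma\subseteq V(T)$ be a set of sites and $s\in\Sigma$. For each vertex $v\in\mathrm{cell}_T(s,\Sigma)$, the path in $T$ from $s$ to $v$ is contained in the subgraph $T[\mathrm{cell}_T(s,\Sigma)]$ induced by $\mathrm{cell}_T(s,\Sigma)$. Likewise, for each $v\in \mathrm{cell}^<_T(s,\Sigma)$, the path in $T$ from $s$ to $v$ is contained in $T[\mathrm{cell}^<_T(s,\Sigma)]$.
   Context: $d_T$ is the shortest-path distance in $T$. For $s\in\Sigma$, $\mathrm{cell}_T(s,\Sigma)=\{x\in V(T)\mid d_T(s,x)\le d_T(s',x)\ \forall s'\in\Sigma\}$ and $\mathrm{cell}^<_T(s,\Sigma)=\{x\in V(T)\mid d_T(s,x)< d_T(s',x)\ \forall s'\in\Sigma\setminus\{s\}\}$. *)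

theory Defs
  imports Complex_Main
begin

definition wgraph :: "'a set \<Rightarrow> ('a \<Rightarrow> 'a \<Rightarrow> bool) \<Rightarrow> ('a \<Rightarrow> 'a \<Rightarrow> real) \<Rightarrow> bool" where
  "wgraph V E w \<longleftrightarrow> finite V \<and> (\<forall>x y. E x y \<longrightarrow> x \<in> V \<and> y \<in> V) \<and>
     (\<forall>x y. E x y \<longrightarrow> E y x) \<and> (\<forall>x. \<not> E x x) \<and> (\<forall>x y. E x y \<longrightarrow> w x y = w y x)"

definition walk :: "'a set \<Rightarrow> ('a \<Rightarrow> 'a \<Rightarrow> bool) \<Rightarrow> 'a list \<Rightarrow> bool" where
  "walk V E p \<longleftrightarrow> p \<noteq> [] \<and> set p \<subseteq> V \<and> (\<forall>i. Suc i < length p \<longrightarrow> E (p ! i) (p ! Suc i))"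

definition gpath :: "'a set \<Rightarrow> ('a \<Rightarrow> 'a \<Rightarrow> bool) \<Rightarrow> 'a list \<Rightarrow> bool" where
  "gpath V E p \<longleftrightarrow> walk V E p \<and> distinct p"

definition connected_graph :: "'a set \<Rightarrow> ('a \<Rightarrow> 'a \<Rightarrow> bool) \<Rightarrow> bool" where
  "connected_graph V E \<longleftrightarrow> (\<forall>u\<in>V. \<forall>v\<in>V. \<exists>p. walk V E p \<and> hd p = u \<and> last p = v)"

definition acyclic_graph :: "'a set \<Rightarrow> ('a \<Rightarrow> 'a \<Rightarrow> bool) \<Rightarrow> bool" where
  "acyclic_graph V E \<longleftrightarrow> \<not> (\<exists>c. gpath V E c \<and> length c \<ge> 3 \<and> E (last c) (hd c))"

definition tree :: "'a set \<Rightarrow> ('a \<Rightarrow> 'a \<Rightarrow> bool) \<Rightarrow> ('a \<Rightarrow> 'a \<Rightarrow> real) \<Rightarrow> bool" where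
  "tree V E w \<longleftrightarrow> wgraph V E w \<and> connected_graph V E \<and> acyclic_graph V E"

definition walk_length :: "('a \<Rightarrow> 'a \<Rightarrow> real) \<Rightarrow> 'a list \<Rightarrow> real" where
  "walk_length w p = (\<Sum>i<length p - 1. w (p ! i) (p ! Suc i))"

definition dist_T :: "'a set \<Rightarrow> ('a \<Rightarrow> 'a \<Rightarrow> bool) \<Rightarrow> ('a \<Rightarrow> 'a \<Rightarrow> real) \<Rightarrow> 'a \<Rightarrow> 'a \<Rightarrow> real" where
  "dist_T V E w u v = Inf {walk_length w p | p. walk V E p \<and> hd p = u \<and> last p = v}"

definition cell :: "'a set \<Rightarrow> ('a \<Rightarrow> 'a \<Rightarrow> bool) \<Rightarrow> ('a \<Rightarrow> 'a \<Rightarrow> real) \<Rightarrow> 'a \<Rightarrow> 'a set \<Rightarrow> 'a set" where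
  "cell V E w s \<Sigma> = {x \<in> V. \<forall>s'\<in>\<Sigma>. dist_T V E w s x \<le> dist_T V E w s' x}"

definition cell_strict :: "'a set \<Rightarrow> ('a \<Rightarrow> 'a \<Rightarrow> bool) \<Rightarrow> ('a \<Rightarrow> 'a \<Rightarrow> real) \<Rightarrow> 'a \<Rightarrow> 'a set \<Rightarrow> 'a set" where
  "cell_strict V E w s \<Sigma> = {x \<in> V. \<forall>s'\<in>\<Sigma> - {s}. dist_T V E w s x < dist_T V E w s' x}"

definition induced_edges :: "('a \<Rightarrow> 'a \<Rightarrow> bool) \<Rightarrow> 'a set \<Rightarrow> 'a \<Rightarrow> 'a \<Rightarrow> bool" where
  "induced_edges E C x y \<longleftrightarrow> E x y \<and> x \<in> C \<and> y \<in> C"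

end

theory Submission
  imports Defs
begin

text \<open>In a tree the unique path between two vertices is a shortest walk: a shorter walk
  would either revisit its start (and can be shortcut) or leave it through a different edge
  than the path, and then walk and path together close a cycle. Hence distances add up
  along paths, so for a vertex x on the path from s to v and any site t,
  d(s,x) - d(t,x) \<le> d(s,v) - d(t,v) by the triangle inequality for d(t,v). The
  advantage of s over every other site can therefore only grow from x towards v, and
  v lying in the (strict) cell of s forces x to lie in it as well.\<close>

lemma walk_singleton [simp]: "walk V E [x] \<longleftrightarrow> x \<in> V"
  by (simp add: walk_def)

lemma walk_Cons_Cons [simp]: "walk V E (x # y # q) \<longleftrightarrow> x \<in> V \<and> E x y \<and> walk V E (y # q)"
  unfolding walk_def by (auto simp: nth_Cons split: nat.splits)

lemma walk_Cons_in_V: "walk V E (x # q) \<Longrightarrow> x \<in> V"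
  by (simp add: walk_def)

lemma walk_length_singleton [simp]: "walk_length w [x] = 0"
  by (simp add: walk_length_def)

lemma walk_length_Cons_Cons [simp]: "walk_length w (x # y # q) = w x y + walk_length w (y # q)"
  unfolding walk_length_def
  by (simp only: length_Cons diff_Suc_1 sum.lessThan_Suc_shift nth_Cons_0 nth_Cons_Suc)

lemma walk_length_nonneg:
  assumes "\<forall>x y. E x y \<longrightarrow> w x y \<ge> 0" and "walk V E q"
  shows "walk_length w q \<ge> 0"
  unfolding walk_length_def
proof (rule sum_nonneg)
  fix i assume "i \<in> {..<length q - 1}"
  then have "E (q ! i) (q ! Suc i)" using assms(2) unfolding walk_def by auto
  then show "w (q ! i) (q ! Suc i) \<ge> 0" using assms(1) by simp
qed

(* Not usable as a simp rule: for ys = [] the right-hand side contains the left-hand side. *)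
lemma walk_append_Cons_iff:
  "walk V E (xs @ x # ys) \<longleftrightarrow> walk V E (xs @ [x]) \<and> walk V E (x # ys)"
proof (induction xs)
  case Nil then show ?case by (cases ys) auto
next
  case (Cons a xs) then show ?case by (cases xs) auto
qed

lemma walk_length_append_Cons:
  "walk_length w (xs @ x # ys) = walk_length w (xs @ [x]) + walk_length w (x # ys)"
proof (induction xs)
  case Nil then show ?case by simp
next
  case (Cons a xs) then show ?case by (cases xs) auto
qed

lemma walk_rev:
  assumes "\<forall>x y. E x y \<longrightarrow> E y x" and "walk V E p"
  shows "walk V E (rev p)"
  using assms(2)
proof (induction p rule: induct_list012)
  case (3 a b p)
  then have "walk V E (b # p)" and "E b a" and "a \<in> V" using assms(1) by simp_all
  then have "walk V E (rev p @ [b])" and "walk V E [b, a]"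
    using "3.IH"(2) by (auto dest: walk_Cons_in_V)
  then have "walk V E (rev p @ b # [a])"
    using walk_append_Cons_iff[of V E "rev p" b "[a]"] by blast
  then show ?case by (metis append.assoc append_Cons append_Nil rev.simps(2))
qed (simp_all add: walk_def)

lemma append_tl_decomp:
  assumes "xs \<noteq> []" "ys \<noteq> []" "last xs = hd ys"
  shows "xs @ tl ys = butlast xs @ last xs # tl ys"
proof -
  have "xs = butlast xs @ [last xs]" "ys = hd ys # tl ys" using assms(1,2) by simp_all
  then show ?thesis using assms(3) by (metis append.assoc append_Cons append_Nil)
qed

lemma walk_append_tl:
  assumes "walk V E xs" "walk V E ys" "last xs = hd ys"
  shows "walk V E (xs @ tl ys)"
proof -
  have ne: "xs \<noteq> []" "ys \<noteq> []" using assms by (auto simp: walk_def)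
  have "walk V E (butlast xs @ [last xs])" using assms(1) ne by simp
  moreover have "walk V E (last xs # tl ys)" using assms(2) ne by (simp add: assms(3))
  ultimately show ?thesis
    using append_tl_decomp[OF ne assms(3)] walk_append_Cons_iff by metis
qed

lemma walk_length_append_tl:
  assumes "xs \<noteq> []" "ys \<noteq> []" "last xs = hd ys"
  shows "walk_length w (xs @ tl ys) = walk_length w xs + walk_length w ys"
proof -
  have "walk_length w (butlast xs @ [last xs]) = walk_length w xs" using assms(1) by simp
  moreover have "walk_length w (last xs # tl ys) = walk_length w ys"
    using assms(2) by (simp add: assms(3))
  ultimately show ?thesis
    using append_tl_decomp[OF assms] walk_length_append_Cons by metis
qed

lemma last_append_tl:
  assumes "xs \<noteq> []" "ys \<noteq> []" "last xs = hd ys"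
  shows "last (xs @ tl ys) = last ys"
  using assms by (cases "tl ys = []") (auto simp: last_tl, metis last_ConsL list.collapse)

lemma walk_contains_path:
  "walk V E q \<Longrightarrow> \<exists>r. gpath V E r \<and> hd r = hd q \<and> last r = last q \<and> set r \<subseteq> set q"
proof (induction q rule: induct_list012)
  case (2 x)
  then show ?case by (intro exI[of _ "[x]"]) (simp add: gpath_def)
next
  case (3 x y q)
  then obtain r where r: "gpath V E r" "hd r = y" "last r = last (y # q)" "set r \<subseteq> set (y # q)"
    by auto
  show ?case
  proof (cases "x \<in> set r")
    case True
    then obtain r1 r2 where split: "r = r1 @ x # r2" by (meson split_list)
    with r(1) have "walk V E (x # r2)" and "distinct (x # r2)"
      using walk_append_Cons_iff[of V E r1 x r2] by (auto simp: gpath_def)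
    with r split show ?thesis by (intro exI[of _ "x # r2"]) (auto simp: gpath_def)
  next
    case False
    from r obtain r' where r': "r = y # r'" by (cases r) (auto simp: gpath_def walk_def)
    with r False "3.prems" have "gpath V E (x # r)" by (simp add: gpath_def)
    with r r' show ?thesis by (intro exI[of _ "x # r"]) auto
  qed
qed (simp add: walk_def)

lemma acyclic_paths_same_first_edge:
  assumes acyc: "acyclic_graph V E" and sym: "\<forall>x y. E x y \<longrightarrow> E y x"
    and p: "gpath V E (s # a # p)" and q: "walk V E (b # q)" and "E s b"
    and avoid: "s \<notin> set (b # q)" and ends: "last (a # p) = last (b # q)"
  shows "a = b"
proof (rule ccontr)
  assume "a \<noteq> b"
  define W where "W = (b # q) @ tl (rev (a # p))"
  have "walk V E (a # p)" using p by (simp add: gpath_def)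
  then have "walk V E (rev (a # p))" by (rule walk_rev[OF sym])
  moreover have "hd (rev (a # p)) = last (b # q)" by (simp only: hd_rev ends)
  ultimately have "walk V E W" "last W = a"
    using walk_append_tl[OF q] last_append_tl[of "b # q" "rev (a # p)"] by (auto simp: W_def)
  moreover have "s \<notin> set (tl (rev (a # p)))"
    using p list.set_sel(2)[of "rev (a # p)" s] by (auto simp: gpath_def)
  then have "s \<notin> set W" using avoid by (simp add: W_def)
  ultimately obtain r where r: "gpath V E r" "hd r = b" "last r = a" "s \<notin> set r"
    using walk_contains_path[of V E W] by (auto simp: W_def)
  then obtain r' where r': "r = b # r'" by (cases r) (auto simp: gpath_def walk_def)
  with r \<open>a \<noteq> b\<close> have "r' \<noteq> []" by auto
  have "gpath V E (s # r)" using r r' p \<open>E s b\<close> by (simp add: gpath_def)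
  moreover have "length (s # r) \<ge> 3" using r' \<open>r' \<noteq> []\<close> by (cases r') auto
  moreover have "E (last (s # r)) (hd (s # r))"
    using r r' p sym by (auto simp: gpath_def)
  ultimately show False using acyc unfolding acyclic_graph_def by blast
qed

lemma acyclic_path_le_walk:
  assumes acyc: "acyclic_graph V E" and sym: "\<forall>x y. E x y \<longrightarrow> E y x"
    and nonneg: "\<forall>x y. E x y \<longrightarrow> w x y \<ge> 0"
  shows "walk V E q \<Longrightarrow> gpath V E p \<Longrightarrow> hd p = hd q \<Longrightarrow> last p = last q
    \<Longrightarrow> walk_length w p \<le> walk_length w q"
proof (induction "length q" arbitrary: q p rule: less_induct)
  case less
  obtain s q1 where q: "q = s # q1" using less.prems(1) by (cases q) (auto simp: walk_def)
  obtain p1 where p: "p = s # p1" using less.prems(2,3) q by (cases p) (auto simp: gpath_def walk_def)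
  show ?case
  proof (cases p1)
    case Nil
    then show ?thesis using p walk_length_nonneg[OF nonneg less.prems(1)] by simp
  next
    case (Cons a p')
    show ?thesis
    proof (cases "s \<in> set q1")
      case True
      then obtain u1 u2 where u: "q1 = u1 @ s # u2" by (meson split_list)
      have q_split: "q = (s # u1) @ s # u2" using q u by simp
      have "walk V E ((s # u1) @ [s])" "walk V E (s # u2)"
        using less.prems(1) walk_append_Cons_iff[of V E "s # u1" s u2] q_split by simp_all
      moreover have "length (s # u2) < length q" using q_split by simp
      ultimately have "walk_length w p \<le> walk_length w (s # u2)"
        using less q_split p by simp
      also have "\<dots> \<le> walk_length w q"
        using walk_length_append_Cons[of w "s # u1" s u2] q_split
          walk_length_nonneg[OF nonneg \<open>walk V E ((s # u1) @ [s])\<close>] by simp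
      finally show ?thesis .
    next
      case False
      have "s \<notin> set (a # p')" using less.prems(2) p Cons by (simp add: gpath_def)
      moreover have "last p \<in> set (a # p')" using p Cons by simp
      ultimately have "q1 \<noteq> []" using less.prems(4) q by auto
      then obtain b q' where q1: "q1 = b # q'" by (cases q1) auto
      have "walk V E (b # q')" "E s b" using less.prems(1) q q1 by simp_all
      moreover have "gpath V E (s # a # p')" using less.prems(2) p Cons by simp
      moreover have "last (a # p') = last (b # q')" using less.prems(4) p q q1 Cons by simp
      ultimately have "a = b"
        using acyclic_paths_same_first_edge[OF acyc sym] False q1 by blast
      moreover have "gpath V E (a # p')"
        using \<open>gpath V E (s # a # p')\<close> by (simp add: gpath_def)
      ultimately have "walk_length w (a # p') \<le> walk_length w (b # q')"
        using less.hyps[of "b # q'" "a # p'"] \<open>walk V E (b # q')\<close>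
          \<open>last (a # p') = last (b # q')\<close> q q1 by simp
      then show ?thesis using p q q1 Cons \<open>a = b\<close> by simp
    qed
  qed
qed

lemma dist_T_le_walk_length:
  assumes nonneg: "\<forall>x y. E x y \<longrightarrow> w x y \<ge> 0" and "walk V E p"
  shows "dist_T V E w (hd p) (last p) \<le> walk_length w p"
  unfolding dist_T_def
proof (rule cInf_lower)
  show "walk_length w p \<in> {walk_length w q |q. walk V E q \<and> hd q = hd p \<and> last q = last p}"
    using assms by blast
  show "bdd_below {walk_length w q |q. walk V E q \<and> hd q = hd p \<and> last q = last p}"
    using walk_length_nonneg[OF nonneg] by (intro bdd_belowI[of _ 0]) auto
qed

lemma dist_T_greatest:
  assumes "connected_graph V E" "u \<in> V" "v \<in> V"
    and "\<And>q. walk V E q \<Longrightarrow> hd q = u \<Longrightarrow> last q = v \<Longrightarrow> c \<le> walk_length w q"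
  shows "c \<le> dist_T V E w u v"
  unfolding dist_T_def
proof (rule cInf_greatest)
  show "{walk_length w p |p. walk V E p \<and> hd p = u \<and> last p = v} \<noteq> {}"
    using assms(1-3) unfolding connected_graph_def by blast
qed (use assms(4) in blast)

lemma tree_dist_T_path:
  assumes tr: "tree V E w" and nonneg: "\<forall>x y. E x y \<longrightarrow> w x y \<ge> 0" and p: "gpath V E p"
  shows "dist_T V E w (hd p) (last p) = walk_length w p"
proof (rule antisym)
  show "dist_T V E w (hd p) (last p) \<le> walk_length w p"
    using dist_T_le_walk_length[OF nonneg] p by (simp add: gpath_def)
  have "connected_graph V E" "acyclic_graph V E" "\<forall>x y. E x y \<longrightarrow> E y x"
    using tr by (simp_all add: tree_def wgraph_def)
  moreover have "hd p \<in> V" "last p \<in> V" using p by (auto simp: gpath_def walk_def)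
  ultimately show "walk_length w p \<le> dist_T V E w (hd p) (last p)"
    using acyclic_path_le_walk[of V E w _ p] nonneg p by (intro dist_T_greatest) auto
qed

lemma dist_T_triangle:
  assumes conn: "connected_graph V E" and nonneg: "\<forall>x y. E x y \<longrightarrow> w x y \<ge> 0"
    and "a \<in> V" "b \<in> V" "c \<in> V"
  shows "dist_T V E w a c \<le> dist_T V E w a b + dist_T V E w b c"
proof -
  have "dist_T V E w a c - dist_T V E w a b \<le> dist_T V E w b c"
  proof (rule dist_T_greatest[OF conn assms(4,5)])
    fix q2 assume q2: "walk V E q2" "hd q2 = b" "last q2 = c"
    have "dist_T V E w a c - walk_length w q2 \<le> dist_T V E w a b"
    proof (rule dist_T_greatest[OF conn assms(3,4)])
      fix q1 assume q1: "walk V E q1" "hd q1 = a" "last q1 = b"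
      have ne: "q1 \<noteq> []" "q2 \<noteq> []" using q1 q2 by (auto simp: walk_def)
      have "last q1 = hd q2" using q1 q2 by simp
      then have "dist_T V E w a c \<le> walk_length w (q1 @ tl q2)"
        using dist_T_le_walk_length[OF nonneg walk_append_tl[OF q1(1) q2(1)]]
          last_append_tl[OF ne] q1 q2 ne by simp
      also have "\<dots> = walk_length w q1 + walk_length w q2"
        using walk_length_append_tl[OF ne \<open>last q1 = hd q2\<close>] .
      finally show "dist_T V E w a c - walk_length w q2 \<le> walk_length w q1" by simp
    qed
    then show "dist_T V E w a c - dist_T V E w a b \<le> walk_length w q2" by simp
  qed
  then show ?thesis by simp
qed

lemma tree_dist_T_on_path:
  assumes tr: "tree V E w" and nonneg: "\<forall>x y. E x y \<longrightarrow> w x y \<ge> 0"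
    and p: "gpath V E p" and x: "x \<in> set p"
  shows "dist_T V E w (hd p) x + dist_T V E w x (last p) = dist_T V E w (hd p) (last p)"
proof -
  obtain p1 p2 where split: "p = p1 @ x # p2" using x by (meson split_list)
  then have "gpath V E (p1 @ [x])" "gpath V E (x # p2)"
    using p walk_append_Cons_iff[of V E p1 x p2] by (auto simp: gpath_def)
  then have "dist_T V E w (hd p) x = walk_length w (p1 @ [x])"
    "dist_T V E w x (last p) = walk_length w (x # p2)"
    using tree_dist_T_path[OF tr nonneg] split by (cases p1; fastforce)+
  then show ?thesis
    using tree_dist_T_path[OF tr nonneg p] walk_length_append_Cons[of w p1 x p2] split by simp
qed

lemma tree_dist_T_diff_on_path:
  assumes tr: "tree V E w" and nonneg: "\<forall>x y. E x y \<longrightarrow> w x y \<ge> 0"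
    and p: "gpath V E p" and x: "x \<in> set p" and "t \<in> V"
  shows "dist_T V E w (hd p) x - dist_T V E w t x
    \<le> dist_T V E w (hd p) (last p) - dist_T V E w t (last p)"
proof -
  have "connected_graph V E" using tr by (simp add: tree_def)
  moreover have "x \<in> V" "last p \<in> V" using p x by (auto simp: gpath_def walk_def)
  ultimately have "dist_T V E w t (last p) \<le> dist_T V E w t x + dist_T V E w x (last p)"
    using dist_T_triangle[OF _ nonneg \<open>t \<in> V\<close>] by blast
  then show ?thesis using tree_dist_T_on_path[OF tr nonneg p x] by simp
qed

lemma tree_path_in_cell:
  assumes tr: "tree V E w" and nonneg: "\<forall>x y. E x y \<longrightarrow> w x y \<ge> 0" and "\<Sigma> \<subseteq> V"
    and p: "gpath V E p" "hd p = s" "last p \<in> cell V E w s \<Sigma>"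
  shows "set p \<subseteq> cell V E w s \<Sigma>"
proof
  fix x assume x: "x \<in> set p"
  have "dist_T V E w s x \<le> dist_T V E w t x" if t: "t \<in> \<Sigma>" for t
  proof -
    have "dist_T V E w s (last p) \<le> dist_T V E w t (last p)"
      using p(3) t by (simp add: cell_def)
    moreover have "t \<in> V" using t \<open>\<Sigma> \<subseteq> V\<close> by blast
    ultimately show ?thesis using tree_dist_T_diff_on_path[OF tr nonneg p(1) x] p(2) by force
  qed
  moreover have "x \<in> V" using p x by (auto simp: gpath_def walk_def)
  ultimately show "x \<in> cell V E w s \<Sigma>" by (simp add: cell_def)
qed

lemma tree_path_in_cell_strict:
  assumes tr: "tree V E w" and nonneg: "\<forall>x y. E x y \<longrightarrow> w x y \<ge> 0" and "\<Sigma> \<subseteq> V"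
    and p: "gpath V E p" "hd p = s" "last p \<in> cell_strict V E w s \<Sigma>"
  shows "set p \<subseteq> cell_strict V E w s \<Sigma>"
proof
  fix x assume x: "x \<in> set p"
  have "dist_T V E w s x < dist_T V E w t x" if t: "t \<in> \<Sigma> - {s}" for t
  proof -
    have "dist_T V E w s (last p) < dist_T V E w t (last p)"
      using p(3) t by (simp add: cell_strict_def)
    moreover have "t \<in> V" using t \<open>\<Sigma> \<subseteq> V\<close> by blast
    ultimately show ?thesis using tree_dist_T_diff_on_path[OF tr nonneg p(1) x] p(2) by force
  qed
  moreover have "x \<in> V" using p x by (auto simp: gpath_def walk_def)
  ultimately show "x \<in> cell_strict V E w s \<Sigma>" by (simp add: cell_strict_def)
qed

lemma gpath_induced_subgraph:
  assumes "gpath V E p" "set p \<subseteq> C"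
  shows "gpath C (induced_edges E C) p"
  using assms unfolding gpath_def walk_def induced_edges_def
  by (auto intro!: nth_mem[THEN subsetD[OF assms(2)]])

theorem lemma2:
  fixes V :: "'a set" and E :: "'a \<Rightarrow> 'a \<Rightarrow> bool" and w :: "'a \<Rightarrow> 'a \<Rightarrow> real"
    and \<Sigma> :: "'a set" and s :: 'a
  assumes "tree V E w"
    and "\<forall>x y. E x y \<longrightarrow> w x y > 0"
    and "\<Sigma> \<subseteq> V" and "s \<in> \<Sigma>"
  shows "(\<forall>v \<in> cell V E w s \<Sigma>. \<forall>p. gpath V E p \<and> hd p = s \<and> last p = v \<longrightarrow>
            gpath (cell V E w s \<Sigma>) (induced_edges E (cell V E w s \<Sigma>)) p)
       \<and> (\<forall>v \<in> cell_strict V E w s \<Sigma>. \<forall>p. gpath V E p \<and> hd p = s \<and> last p = v \<longrightarrow>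
            gpath (cell_strict V E w s \<Sigma>) (induced_edges E (cell_strict V E w s \<Sigma>)) p)"
proof -
  have nonneg: "\<forall>x y. E x y \<longrightarrow> w x y \<ge> 0" using assms(2) by (simp add: less_imp_le)
  show ?thesis
    using tree_path_in_cell[OF assms(1) nonneg assms(3)]
      tree_path_in_cell_strict[OF assms(1) nonneg assms(3)]
    by (blast intro: gpath_induced_subgraph)
qed

end
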